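(* In the setting described in the context, for every $\boldsymbol{x}\in\mathbb{Z}_+^2$, $\Gamma\subset\mathcal{D}_{\boldsymbol{x}}$, and hence $\mathcal{D}\subset\mathcal{D}_{\boldsymbol{x}}$.
   Context: Let $S_0=\{1,\dots,s_0\}$ be finite and $\{\boldsymbol{Y}_n\}$ a Markov chain on $\mathbb{S}=\mathbb{Z}^2\times S_0$ with $\mathbb{P}(\boldsymbol{Y}_{n+1}=(x_1+k,x_2+l,j')\mid\boldsymbol{Y}_n=(x_1,x_2,j))=[A_{k,l}]_{j,j'}$ for $k,l\in\{-1,0,1\}$ (no other transitions), $A_{k,l}$ nonnegative $s_0\times s_0$ with $\sum A_{k,l}$ stochastic. Let $\mathbb{S}_+=\mathbb{Z}_+^2\times S_0$, $P_+$ the restriction of the transition matrix to $\mathbb{S}_+$, $\tau=\inf\{n\ge0:\boldsymbol{Y}_n\notin\mathbb{S}_+\}$, $\tilde q_{\boldsymbol{y},\boldsymbol{y}'}=\mathbb{E}\big(\sum_{n=0}^{\tau-1}1(\boldsymbol{Y}_n=\boldsymbol{y}')\mid\boldsymbol{Y}_0=\boldsymbol{y}\big)$. With $\boldsymbol\pi_{*,*}$ the stationary distribution of $\sum A_{k,l}$, $a_1=\boldsymbol{\pi}_{*,*}\sum_l(A_{1,l}-A_{-1,l})\mathbf{1}$, $a_2=\boldsymbol{\pi}_{*,*}\sum_k(A_{k,1}-A_{k,-1})\mathbf{1}$. Standing assumptions: $\{\boldsymbol Y_n\}$ irreducible and aperiodic; $a_1<0$ or $a_2<0$; $P_+$ irreducible.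 $\Phi_{\boldsymbol{x}}(\theta_1,\theta_2)$ is the $s_0\times s_0$ matrix with $(j,j')$ entry $\sum_{k_1,k_2\ge0}e^{k_1\theta_1+k_2\theta_2}\tilde q_{(\boldsymbol{x},j),(k_1,k_2,j')}$; $\mathcal{D}_{\boldsymbol{x}}$ is the interior of $\{(\theta_1,\theta_2):\Phi_{\boldsymbol{x}}(\theta_1,\theta_2)<\infty\text{ elementwise}\}$. $A_{*,*}(\theta_1,\theta_2)=\sum_{k,l}e^{k\theta_1+l\theta_2}A_{k,l}$, $\Gamma=\{(\theta_1,\theta_2)\in\mathbb{R}^2:\mathrm{spr}(A_{*,*}(\theta_1,\theta_2))<1\}$ (spr = spectral radius), and $\mathcal{D}=\{(\theta_1,\theta_2)\in\mathbb{R}^2:\exists(\theta_1',\theta_2')\in\Gamma\text{ with }\theta_1<\theta_1',\ \theta_2<\theta_2'\}$. *)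

theory Defs
  imports "HOL-Analysis.Analysis"
begin

text \<open>States are triples (x1, x2, j) with x1 x2 integers and j a phase in the
finite type 'j (so s0 = CARD('j)).  The block matrices A k l (k,l in {-1,0,1})
are given as functions A k l j j'.  Values of A outside k,l in {-1,0,1} are irrelevant.\<close>

definition steps :: "int set" where "steps = {-1, 0, 1}"

text \<open>n-step transition probabilities of the chain on Z^2 x S0
(first-step decomposition of the n-th matrix power).\<close>
fun Pn :: "(int \<Rightarrow> int \<Rightarrow> 'j::finite \<Rightarrow> 'j \<Rightarrow> real) \<Rightarrow> nat
           \<Rightarrow> int \<times> int \<times> 'j \<Rightarrow> int \<times> int \<times> 'j \<Rightarrow> real" where
  "Pn A 0 y y' = (if y = y' then 1 else 0)"
| "Pn A (Suc n) (x1, x2, j) y' =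
     (\<Sum>k\<in>steps. \<Sum>l\<in>steps. \<Sum>i\<in>UNIV. A k l j i * Pn A n (x1 + k, x2 + l, i) y')"

definition Splus :: "(int \<times> int \<times> 'j) set" where
  "Splus = {(x1, x2, j). x1 \<ge> 0 \<and> x2 \<ge> 0}"

text \<open>Entries of the n-th power of P_+ (restriction of P to S_+);
for y in S_+, Qn A n y y' = P(Y_0,...,Y_n in S_+, Y_n = y' | Y_0 = y) = P(Y_n = y', n < tau | Y_0 = y).\<close>
fun Qn :: "(int \<Rightarrow> int \<Rightarrow> 'j::finite \<Rightarrow> 'j \<Rightarrow> real) \<Rightarrow> nat
           \<Rightarrow> int \<times> int \<times> 'j \<Rightarrow> int \<times> int \<times> 'j \<Rightarrow> real" where
  "Qn A 0 y y' = (if y = y' \<and> y \<in> Splus then 1 else 0)"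
| "Qn A (Suc n) (x1, x2, j) y' =
     (if (x1, x2, j) \<in> Splus then
       (\<Sum>k\<in>steps. \<Sum>l\<in>steps. \<Sum>i\<in>UNIV. A k l j i * Qn A n (x1 + k, x2 + l, i) y')
      else 0)"

text \<open>Expected number of visits to y' before leaving S_+:
 E(sum_{n<tau} 1(Y_n = y') | Y_0 = y) = sum_n P(Y_n = y', n < tau | Y_0 = y).\<close>
definition qtilde :: "(int \<Rightarrow> int \<Rightarrow> 'j::finite \<Rightarrow> 'j \<Rightarrow> real)
     \<Rightarrow> int \<times> int \<times> 'j \<Rightarrow> int \<times> int \<times> 'j \<Rightarrow> ennreal" where
  "qtilde A y y' = (\<Sum>n. ennreal (Qn A n y y'))"

definition Phi :: "(int \<Rightarrow> int \<Rightarrow> 'j::finite \<Rightarrow> 'j \<Rightarrow> real) \<Rightarrow> int \<times> int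
     \<Rightarrow> real \<times> real \<Rightarrow> 'j \<Rightarrow> 'j \<Rightarrow> ennreal" where
  "Phi A x \<theta> j j' =
     infsum (\<lambda>(k1::nat, k2::nat). ennreal (exp (real k1 * fst \<theta> + real k2 * snd \<theta>))
                * qtilde A (fst x, snd x, j) (int k1, int k2, j')) UNIV"

definition Dx :: "(int \<Rightarrow> int \<Rightarrow> 'j::finite \<Rightarrow> 'j \<Rightarrow> real) \<Rightarrow> int \<times> int \<Rightarrow> (real \<times> real) set" where
  "Dx A x = interior {\<theta>. \<forall>j j'. Phi A x \<theta> j j' < top}"

definition Astar :: "(int \<Rightarrow> int \<Rightarrow> 'j::finite \<Rightarrow> 'j \<Rightarrow> real) \<Rightarrow> real \<times> real \<Rightarrow> 'j \<Rightarrow> 'j \<Rightarrow> real" where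
  "Astar A \<theta> j j' = (\<Sum>k\<in>steps. \<Sum>l\<in>steps. exp (real_of_int k * fst \<theta> + real_of_int l * snd \<theta>) * A k l j j')"

definition spr :: "('j::finite \<Rightarrow> 'j \<Rightarrow> real) \<Rightarrow> real" where
  "spr M = Sup {cmod \<mu> | \<mu>. \<exists>v :: 'j \<Rightarrow> complex. (\<exists>i. v i \<noteq> 0) \<and>
                   (\<forall>i. (\<Sum>j\<in>UNIV. complex_of_real (M i j) * v j) = \<mu> * v i)}"

definition Gamma :: "(int \<Rightarrow> int \<Rightarrow> 'j::finite \<Rightarrow> 'j \<Rightarrow> real) \<Rightarrow> (real \<times> real) set" where
  "Gamma A = {\<theta>. spr (Astar A \<theta>) < 1}"

definition Dset :: "(int \<Rightarrow> int \<Rightarrow> 'j::finite \<Rightarrow> 'j \<Rightarrow> real) \<Rightarrow> (real \<times> real) set" where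
  "Dset A = {\<theta>. \<exists>\<theta>'\<in>Gamma A. fst \<theta> < fst \<theta>' \<and> snd \<theta> < snd \<theta>'}"

end

theory Submission
  imports Defs "Jordan_Normal_Form.Spectral_Radius"
begin

text \<open>
  If \<open>spr (Astar A \<theta>) < 1\<close>, the Neumann series \<open>v = (\<Sum>n. Astar A \<theta> ^ n) 1\<close> converges and yields a
  vector \<open>v \<ge> 1\<close> with \<open>Astar A \<theta> v \<le> \<rho> v\<close> for some \<open>\<rho> < 1\<close>; by continuity of \<open>Astar\<close> in \<open>\<theta>\<close> the same
  \<open>v\<close> works, with a slightly larger \<open>\<rho> < 1\<close>, for all \<open>\<eta>\<close> near \<open>\<theta>\<close>. The function
  \<open>(x, j) \<mapsto> exp (x \<bullet> \<eta>) v j\<close> is then \<open>\<rho>\<close>-superharmonic for the chain killed on leaving \<open>S\<^sub>+\<close>, so the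
  contribution of time \<open>n\<close> to \<open>\<Phi>\<^sub>x(\<eta>)\<close> is at most \<open>exp (x \<bullet> \<eta>) v j \<rho>\<^sup>n\<close>, and \<open>\<Phi>\<^sub>x\<close> is finite
  on a neighbourhood of \<open>\<theta>\<close>. Since \<open>\<Phi>\<^sub>x\<close> is monotone in \<open>\<theta>\<close>, it is also finite near every point
  strictly below a point of \<open>\<Gamma>\<close>.
\<close>

fun matpow :: "('j::finite \<Rightarrow> 'j \<Rightarrow> real) \<Rightarrow> nat \<Rightarrow> 'j \<Rightarrow> 'j \<Rightarrow> real" where
  "matpow M 0 i j = (if i = j then 1 else 0)"
| "matpow M (Suc n) i j = (\<Sum>l\<in>UNIV. matpow M n i l * M l j)"

lemma matpow_Suc_left: "matpow M (Suc n) i j = (\<Sum>l\<in>UNIV. M i l * matpow M n l j)"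
proof (induction n arbitrary: i j)
  case 0
  then show ?case by (simp add: if_distrib if_distribR cong: if_cong)
next
  case (Suc n)
  have "matpow M (Suc (Suc n)) i j = (\<Sum>l\<in>UNIV. \<Sum>m\<in>UNIV. M i m * (matpow M n m l * M l j))"
    using Suc by (simp add: sum_distrib_right mult.assoc)
  also have "\<dots> = (\<Sum>m\<in>UNIV. M i m * matpow M (Suc n) m j)"
    by (subst sum.swap) (simp add: sum_distrib_left)
  finally show ?case .
qed

lemma matpow_nonneg: "(\<And>i j. M i j \<ge> 0) \<Longrightarrow> matpow M n i j \<ge> 0"
  by (induction n arbitrary: i j) (auto intro!: sum_nonneg)

lemma matpow_divide: "matpow (\<lambda>i j. M i j / r) n i j = matpow M n i j / r ^ n"
  by (induction n arbitrary: j) (simp_all add: sum_divide_distrib mult.commute)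

definition fun_eigenvalue :: "('j::finite \<Rightarrow> 'j \<Rightarrow> real) \<Rightarrow> complex \<Rightarrow> bool" where
  "fun_eigenvalue M \<mu> \<longleftrightarrow> (\<exists>v. (\<exists>i. v i \<noteq> 0) \<and>
     (\<forall>i. (\<Sum>j\<in>UNIV. complex_of_real (M i j) * v j) = \<mu> * v i))"

lemma spr_eq_Sup_fun_eigenvalue: "spr M = Sup {cmod \<mu> | \<mu>. fun_eigenvalue M \<mu>}"
  unfolding spr_def fun_eigenvalue_def ..

lemma fun_eigenvalue_norm_le_abs_sum:
  assumes "fun_eigenvalue M \<mu>"
  shows "cmod \<mu> \<le> (\<Sum>i\<in>UNIV. \<Sum>j\<in>UNIV. \<bar>M i j\<bar>)"
proof -
  obtain w i1 where w: "w i1 \<noteq> 0" and eq: "\<And>i. (\<Sum>j\<in>UNIV. complex_of_real (M i j) * w j) = \<mu> * w i"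
    using assms unfolding fun_eigenvalue_def by blast
  have "Max (range (\<lambda>i. cmod (w i))) \<in> range (\<lambda>i. cmod (w i))" by (rule Max_in) auto
  then obtain i0 where i0: "Max (range (\<lambda>i. cmod (w i))) = cmod (w i0)" by blast
  have max: "cmod (w i) \<le> cmod (w i0)" for i
    unfolding i0[symmetric] by (rule Max_ge) auto
  have pos: "cmod (w i0) > 0" using max[of i1] w by auto
  have "cmod \<mu> * cmod (w i0) = cmod (\<Sum>j\<in>UNIV. complex_of_real (M i0 j) * w j)"
    using eq by (simp add: norm_mult)
  also have "\<dots> \<le> (\<Sum>j\<in>UNIV. \<bar>M i0 j\<bar> * cmod (w i0))"
    by (rule order_trans[OF norm_sum sum_mono]) (simp add: norm_mult mult_left_mono max)
  also have "\<dots> = (\<Sum>j\<in>UNIV. \<bar>M i0 j\<bar>) * cmod (w i0)"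
    by (simp add: sum_distrib_right)
  finally have "cmod \<mu> \<le> (\<Sum>j\<in>UNIV. \<bar>M i0 j\<bar>)"
    using pos by simp
  also have "\<dots> \<le> (\<Sum>i\<in>UNIV. \<Sum>j\<in>UNIV. \<bar>M i j\<bar>)"
    by (rule member_le_sum) (auto intro: sum_nonneg)
  finally show ?thesis .
qed

lemma fun_eigenvalue_norm_le_spr:
  assumes "fun_eigenvalue M \<mu>"
  shows "cmod \<mu> \<le> spr M"
proof -
  have "bdd_above {cmod \<mu> | \<mu>. fun_eigenvalue M \<mu>}"
    by (rule bdd_aboveI[where M = "\<Sum>i\<in>UNIV. \<Sum>j\<in>UNIV. \<bar>M i j\<bar>"])
      (auto intro: fun_eigenvalue_norm_le_abs_sum)
  with assms show ?thesis unfolding spr_eq_Sup_fun_eigenvalue by (intro cSup_upper) auto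
qed

lemma fun_eigenvalue_divide:
  assumes "fun_eigenvalue (\<lambda>i j. M i j / r) \<mu>" "r \<noteq> 0"
  shows "fun_eigenvalue M (complex_of_real r * \<mu>)"
proof -
  obtain v where "\<exists>i. v i \<noteq> 0" and
    eq: "\<And>i. (\<Sum>j\<in>UNIV. complex_of_real (M i j / r) * v j) = \<mu> * v i"
    using assms(1) unfolding fun_eigenvalue_def by blast
  moreover have "(\<Sum>j\<in>UNIV. complex_of_real (M i j) * v j) = complex_of_real r * \<mu> * v i" for i
  proof -
    have "(\<Sum>j\<in>UNIV. complex_of_real (M i j / r) * v j)
        = (\<Sum>j\<in>UNIV. complex_of_real (M i j) * v j) / complex_of_real r"
      by (simp add: sum_divide_distrib)
    with eq[of i] assms(2) show ?thesis by (simp add: field_simps)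
  qed
  ultimately show ?thesis unfolding fun_eigenvalue_def by blast
qed

definition mat_of_fun :: "nat \<Rightarrow> (nat \<Rightarrow> 'j) \<Rightarrow> ('j \<Rightarrow> 'j \<Rightarrow> real) \<Rightarrow> complex mat" where
  "mat_of_fun N h M = mat N N (\<lambda>(a, b). complex_of_real (M (h a) (h b)))"

lemma mat_of_fun_carrier: "mat_of_fun N h M \<in> carrier_mat N N"
  unfolding mat_of_fun_def by simp

lemma mat_of_fun_pow:
  assumes h: "bij_betw h {..<N} (UNIV :: 'j::finite set)" and "a < N" "b < N"
  shows "(mat_of_fun N h M ^\<^sub>m k) $$ (a, b) = complex_of_real (matpow M k (h a) (h b))"
  using assms(3)
proof (induction k arbitrary: b)
  case 0
  have "h a = h b \<longleftrightarrow> a = b" using h \<open>a < N\<close> 0 by (auto simp: bij_betw_def inj_on_def)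
  then show ?case using 0 \<open>a < N\<close> by (simp add: mat_of_fun_def)
next
  case (Suc k)
  have "(mat_of_fun N h M ^\<^sub>m Suc k) $$ (a, b)
      = (\<Sum>c<N. (mat_of_fun N h M ^\<^sub>m k) $$ (a, c) * mat_of_fun N h M $$ (c, b))"
    using Suc.prems \<open>a < N\<close> mat_of_fun_carrier[of N h M]
    by (simp add: scalar_prod_def atLeast0LessThan)
  also have "\<dots> = (\<Sum>c<N. complex_of_real (matpow M k (h a) (h c) * M (h c) (h b)))"
    using Suc by (intro sum.cong) (auto simp: mat_of_fun_def)
  also have "\<dots> = complex_of_real (\<Sum>l\<in>UNIV. matpow M k (h a) l * M l (h b))"
    unfolding of_real_sum by (rule sum.reindex_bij_betw[OF h])
  also have "\<dots> = complex_of_real (matpow M (Suc k) (h a) (h b))" by simp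
  finally show ?case .
qed

lemma mat_of_fun_eigenvalue:
  assumes h: "bij_betw h {..<N} (UNIV :: 'j::finite set)"
    and "\<mu> \<in> spectrum (mat_of_fun N h (M :: 'j \<Rightarrow> 'j \<Rightarrow> real))"
  shows "fun_eigenvalue M \<mu>"
proof -
  obtain v where v: "v \<in> carrier_vec N" "v \<noteq> 0\<^sub>v N" "mat_of_fun N h M *\<^sub>v v = \<mu> \<cdot>\<^sub>v v"
    using assms(2) mat_of_fun_carrier[of N h M]
    unfolding spectrum_def eigenvalue_def eigenvector_def by auto
  define g where "g = the_inv_into {..<N} h"
  have hg: "h (g i) = i" and gN: "g i < N" for i
    using h f_the_inv_into_f_bij_betw[OF h] the_inv_into_into[of h "{..<N}" i "{..<N}"]
    unfolding g_def bij_betw_def by auto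
  have gh: "a < N \<Longrightarrow> g (h a) = a" for a
    using h unfolding g_def by (simp add: bij_betw_def the_inv_into_f_f)
  define w where "w i = v $ g i" for i
  obtain a where a: "a < N" "v $ a \<noteq> 0"
    using v(1,2) by (metis carrier_vecD eq_vecI index_zero_vec(1,2))
  have "w (h a) \<noteq> 0" unfolding w_def using gh a by simp
  moreover have "(\<Sum>j\<in>UNIV. complex_of_real (M i j) * w j) = \<mu> * w i" for i
  proof -
    have "(mat_of_fun N h M *\<^sub>v v) $ g i = (\<mu> \<cdot>\<^sub>v v) $ g i" using v(3) by simp
    hence "(\<Sum>c<N. complex_of_real (M i (h c)) * v $ c) = \<mu> * w i"
      using gN[of i] v(1) unfolding mat_of_fun_def w_def
      by (simp add: hg mult_mat_vec_def scalar_prod_def atLeast0LessThan)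
    moreover have "(\<Sum>c<N. complex_of_real (M i (h c)) * v $ c)
        = (\<Sum>c<N. complex_of_real (M i (h c)) * w (h c))"
      unfolding w_def by (intro sum.cong) (auto simp: gh)
    ultimately show ?thesis
      using sum.reindex_bij_betw[OF h, of "\<lambda>j. complex_of_real (M i j) * w j"] by simp
  qed
  ultimately show ?thesis unfolding fun_eigenvalue_def by blast
qed

lemma matpow_bounded_if_eigenvalues_less_1:
  fixes M :: "'j::finite \<Rightarrow> 'j \<Rightarrow> real"
  assumes "\<And>\<mu>. fun_eigenvalue M \<mu> \<Longrightarrow> cmod \<mu> < 1"
  shows "\<exists>C. \<forall>n i j. \<bar>matpow M n i j\<bar> \<le> C"
proof -
  define N where "N = CARD('j)"
  obtain h where h: "bij_betw h {..<N} (UNIV :: 'j set)"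
    using ex_bij_betw_nat_finite[of "UNIV :: 'j set"] unfolding N_def atLeast0LessThan by auto
  let ?B = "mat_of_fun N h M"
  have "N > 0" unfolding N_def by (simp add: finite_UNIV_card_ge_0)
  hence "spectrum ?B \<noteq> {}" by (rule spectrum_non_empty[OF mat_of_fun_carrier])
  moreover have "finite (spectrum ?B)" by (rule card_finite_spectrum(1)[OF mat_of_fun_carrier])
  ultimately have "spectral_radius ?B < 1"
    unfolding spectral_radius_def using assms mat_of_fun_eigenvalue[OF h]
    by (subst Max_less_iff) auto
  then obtain c where c: "\<And>k. norm_bound (?B ^\<^sub>m k) c"
    using spectral_radius_jnf_norm_bound_less_1_upper_triangular[OF mat_of_fun_carrier] by blast
  have "\<bar>matpow M n i j\<bar> \<le> c" for n i j
  proof -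
    obtain a b where "a < N" "b < N" "h a = i" "h b = j"
      using h unfolding bij_betw_def by (metis UNIV_I imageE lessThan_iff)
    moreover have "?B ^\<^sub>m n \<in> carrier_mat N N" by (simp add: mat_of_fun_carrier)
    ultimately have "norm ((?B ^\<^sub>m n) $$ (a, b)) \<le> c"
      using c[of n] unfolding norm_bound_def carrier_mat_def by force
    with mat_of_fun_pow[OF h \<open>a < N\<close> \<open>b < N\<close>] \<open>h a = i\<close> \<open>h b = j\<close> show ?thesis by simp
  qed
  thus ?thesis by blast
qed

lemma matpow_geometric_decay:
  fixes M :: "'j::finite \<Rightarrow> 'j \<Rightarrow> real"
  assumes "spr M < 1"
  shows "\<exists>C r. 0 < r \<and> r < 1 \<and> (\<forall>n i j. \<bar>matpow M n i j\<bar> \<le> C * r ^ n)"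
proof -
  define r where "r = (max (spr M) 0 + 1) / 2"
  have r: "0 < r" "r < 1" "spr M < r" using assms unfolding r_def by auto
  have "cmod \<mu> < 1" if "fun_eigenvalue (\<lambda>i j. M i j / r) \<mu>" for \<mu>
  proof -
    have "r * cmod \<mu> \<le> spr M"
      using fun_eigenvalue_norm_le_spr[OF fun_eigenvalue_divide[OF that]] r by (simp add: norm_mult)
    with r have "r * cmod \<mu> < r * 1" by linarith
    with r show ?thesis by (simp only: mult_less_cancel_left_pos)
  qed
  then obtain C where "\<And>n i j. \<bar>matpow M n i j / r ^ n\<bar> \<le> C"
    using matpow_bounded_if_eigenvalues_less_1[of "\<lambda>i j. M i j / r"] by (auto simp: matpow_divide)
  hence "\<bar>matpow M n i j\<bar> \<le> C * r ^ n" for n i j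
    using r by (simp add: abs_div pos_divide_le_eq)
  with r show ?thesis by blast
qed

lemma spr_less_1_Lyapunov_vector:
  fixes M :: "'j::finite \<Rightarrow> 'j \<Rightarrow> real"
  assumes nonneg: "\<And>i j. M i j \<ge> 0" and spr: "spr M < 1"
  obtains v \<rho> where "\<And>i. v i \<ge> 1" "0 < \<rho>" "\<rho> < 1" "\<And>i. (\<Sum>j\<in>UNIV. M i j * v j) \<le> \<rho> * v i"
proof -
  obtain C r where r: "0 < r" "r < 1" and Cb: "\<And>n i j. \<bar>matpow M n i j\<bar> \<le> C * r ^ n"
    using matpow_geometric_decay[OF spr] by blast
  define a where "a n i = (\<Sum>j\<in>UNIV. matpow M n i j)" for n i
  have a_nonneg: "a n i \<ge> 0" for n i
    unfolding a_def by (intro sum_nonneg matpow_nonneg nonneg)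
  have summable_a: "summable (\<lambda>n. a n i)" for i
  proof (rule summable_comparison_test')
    show "summable (\<lambda>n. real CARD('j) * C * r ^ n)"
      using r by (intro summable_mult summable_geometric) auto
    fix n
    have "norm (a n i) \<le> (\<Sum>j\<in>UNIV. \<bar>matpow M n i j\<bar>)" unfolding a_def by simp
    also have "\<dots> \<le> (\<Sum>j\<in>(UNIV :: 'j set). C * r ^ n)" by (rule sum_mono) (rule Cb)
    finally show "norm (a n i) \<le> real CARD('j) * C * r ^ n" by (simp add: mult.assoc)
  qed
  define v where "v i = (\<Sum>n. a n i)" for i
  have a0: "a 0 i = 1" for i unfolding a_def by simp
  have v_ge_1: "v i \<ge> 1" for i
    using sum_le_suminf[OF summable_a, of "{0}" i] a_nonneg a0 unfolding v_def by simp
  have Mv: "(\<Sum>j\<in>UNIV. M i j * v j) = v i - 1" for i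
  proof -
    have "(\<Sum>j\<in>UNIV. M i j * v j) = (\<Sum>n. \<Sum>j\<in>UNIV. M i j * a n j)"
      unfolding v_def suminf_mult[OF summable_a, symmetric]
      by (rule suminf_sum[symmetric]) (intro summable_mult summable_a)
    also have "\<dots> = (\<Sum>n. a (Suc n) i)"
      unfolding a_def matpow_Suc_left sum_distrib_left by (subst sum.swap) simp
    also have "\<dots> = v i - 1"
      unfolding v_def using suminf_split_head[OF summable_a] a0 by simp
    finally show ?thesis .
  qed
  define V where "V = (\<Sum>i\<in>UNIV. v i)"
  have v_le_V: "v i \<le> V" for i
    unfolding V_def by (rule member_le_sum) (use v_ge_1 in \<open>auto intro: order_trans[OF zero_le_one]\<close>)
  have V_ge_1: "V \<ge> 1" using v_le_V v_ge_1 order_trans by blast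
  define \<rho> where "\<rho> = 1 - 1 / (2 * V)"
  show ?thesis
  proof
    show "0 < \<rho>" "\<rho> < 1" unfolding \<rho>_def using V_ge_1 by (auto simp: field_simps)
    show "(\<Sum>j\<in>UNIV. M i j * v j) \<le> \<rho> * v i" for i
      using v_le_V[of i] V_ge_1 unfolding Mv \<rho>_def by (simp add: field_simps)
  qed (fact v_ge_1)
qed

lemma Astar_nonneg: "(\<And>k l j j'. A k l j j' \<ge> 0) \<Longrightarrow> Astar A \<theta> i j \<ge> 0"
  unfolding Astar_def by (auto intro!: sum_nonneg)

lemma Astar_le_exp_mult:
  assumes nonneg: "\<And>k l j j'. A k l j j' \<ge> 0"
    and "\<bar>fst \<eta> - fst \<theta>\<bar> \<le> d" "\<bar>snd \<eta> - snd \<theta>\<bar> \<le> d"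
  shows "Astar A \<eta> i j \<le> exp (2 * d) * Astar A \<theta> i j"
  unfolding Astar_def sum_distrib_left
proof (intro sum_mono)
  fix k l assume "k \<in> steps" "l \<in> steps"
  hence "real_of_int k * fst \<eta> + real_of_int l * snd \<eta>
      \<le> 2 * d + (real_of_int k * fst \<theta> + real_of_int l * snd \<theta>)"
    using assms(2,3) unfolding steps_def by (auto simp: abs_le_iff algebra_simps)
  hence "exp (real_of_int k * fst \<eta> + real_of_int l * snd \<eta>)
      \<le> exp (2 * d) * exp (real_of_int k * fst \<theta> + real_of_int l * snd \<theta>)"
    by (simp add: exp_add[symmetric])
  thus "exp (real_of_int k * fst \<eta> + real_of_int l * snd \<eta>) * A k l i j
      \<le> exp (2 * d) * (exp (real_of_int k * fst \<theta> + real_of_int l * snd \<theta>) * A k l i j)"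
    using nonneg[of k l i j] by (simp add: mult_right_mono mult.assoc[symmetric])
qed

lemma Gamma_Lyapunov_vector_near:
  fixes A :: "int \<Rightarrow> int \<Rightarrow> 'j::finite \<Rightarrow> 'j \<Rightarrow> real"
  assumes nonneg: "\<And>k l j j'. A k l j j' \<ge> 0" and "\<theta> \<in> Gamma A"
  obtains v \<rho> d where "\<And>i. v i \<ge> 1" "0 \<le> \<rho>" "\<rho> < 1" "d > 0"
    "\<And>\<eta> i. \<eta> \<in> ball \<theta> d \<Longrightarrow> (\<Sum>j\<in>UNIV. Astar A \<eta> i j * v j) \<le> \<rho> * v i"
proof -
  have "spr (Astar A \<theta>) < 1" using assms(2) unfolding Gamma_def by simp
  then obtain v \<rho>0 where v_ge_1: "\<And>i. v i \<ge> 1" and \<rho>0: "0 < \<rho>0" "\<rho>0 < 1"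
    and Lyap: "\<And>i. (\<Sum>j\<in>UNIV. Astar A \<theta> i j * v j) \<le> \<rho>0 * v i"
    using spr_less_1_Lyapunov_vector[of "Astar A \<theta>", OF Astar_nonneg[OF nonneg]] by blast
  define d where "d = - ln \<rho>0 / 4" \<comment> \<open>so that \<open>\<rho> = sqrt \<rho>0\<close>\<close>
  define \<rho> where "\<rho> = exp (2 * d) * \<rho>0"
  have "d > 0" unfolding d_def using \<rho>0 by simp
  have "\<rho> = exp (2 * d + ln \<rho>0)" unfolding \<rho>_def using \<rho>0 by (simp add: exp_add)
  also have "\<dots> < 1" unfolding d_def using \<rho>0 by simp
  finally have "\<rho> < 1" .
  moreover have "(\<Sum>j\<in>UNIV. Astar A \<eta> i j * v j) \<le> \<rho> * v i" if "\<eta> \<in> ball \<theta> d" for \<eta> i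
  proof -
    have "dist \<eta> \<theta> < d" using that by (simp add: dist_commute)
    hence "\<bar>fst \<eta> - fst \<theta>\<bar> \<le> d" "\<bar>snd \<eta> - snd \<theta>\<bar> \<le> d"
      using dist_fst_le[of \<eta> \<theta>] dist_snd_le[of \<eta> \<theta>] by (simp_all add: dist_real_def)
    from Astar_le_exp_mult[of A, OF nonneg this]
    have "(\<Sum>j\<in>UNIV. Astar A \<eta> i j * v j) \<le> (\<Sum>j\<in>UNIV. exp (2 * d) * Astar A \<theta> i j * v j)"
      using v_ge_1 by (intro sum_mono mult_right_mono) (auto intro: order_trans[OF zero_le_one])
    also have "\<dots> = exp (2 * d) * (\<Sum>j\<in>UNIV. Astar A \<theta> i j * v j)"
      by (simp add: sum_distrib_left mult.assoc)
    also have "\<dots> \<le> \<rho> * v i" unfolding \<rho>_def using Lyap[of i] by (simp add: mult.assoc)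
    finally show ?thesis .
  qed
  moreover have "0 \<le> \<rho>" unfolding \<rho>_def using \<rho>0 by simp
  ultimately show ?thesis using that[of v \<rho> d] v_ge_1 \<open>d > 0\<close> by blast
qed

lemma Qn_nonneg: "(\<And>k l j j'. A k l j j' \<ge> 0) \<Longrightarrow> Qn A n y y' \<ge> 0"
  by (induction A n y y' rule: Qn.induct) (auto intro!: sum_nonneg mult_nonneg_nonneg)

lemma sum_steps_exp_eq_Astar:
  "(\<Sum>k\<in>steps. \<Sum>l\<in>steps. \<Sum>i\<in>UNIV.
      A k l j i * (exp (real_of_int (x1 + k) * e1 + real_of_int (x2 + l) * e2) * c * v i))
    = exp (real_of_int x1 * e1 + real_of_int x2 * e2) * c * (\<Sum>i\<in>UNIV. Astar A (e1, e2) j i * v i)"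
proof -
  have "(\<Sum>k\<in>steps. \<Sum>l\<in>steps. \<Sum>i\<in>UNIV.
      A k l j i * (exp (real_of_int (x1 + k) * e1 + real_of_int (x2 + l) * e2) * c * v i))
    = exp (real_of_int x1 * e1 + real_of_int x2 * e2) * c *
      (\<Sum>k\<in>steps. \<Sum>l\<in>steps. \<Sum>i\<in>UNIV. exp (real_of_int k * e1 + real_of_int l * e2) * A k l j i * v i)"
    by (simp add: sum_distrib_left algebra_simps exp_add[symmetric])
  also have "(\<Sum>k\<in>steps. \<Sum>l\<in>steps. \<Sum>i\<in>UNIV. exp (real_of_int k * e1 + real_of_int l * e2) * A k l j i * v i)
     = (\<Sum>i\<in>UNIV. Astar A (e1, e2) j i * v i)"
    unfolding Astar_def sum_distrib_right by (simp only: sum.swap[of _ UNIV] fst_conv snd_conv)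
  finally show ?thesis .
qed

lemma Qn_exp_moment_le:
  fixes A :: "int \<Rightarrow> int \<Rightarrow> 'j::finite \<Rightarrow> 'j \<Rightarrow> real"
  assumes nonneg: "\<And>k l j j'. A k l j j' \<ge> 0" and v_ge_1: "\<And>i. v i \<ge> 1" and "0 \<le> \<rho>"
    and Lyap: "\<And>i. (\<Sum>j\<in>UNIV. Astar A (e1, e2) i j * v j) \<le> \<rho> * v i"
    and "finite F"
  shows "(\<Sum>p\<in>F. exp (real (fst p) * e1 + real (snd p) * e2) *
            Qn A n (x1, x2, j) (int (fst p), int (snd p), j'))
     \<le> exp (real_of_int x1 * e1 + real_of_int x2 * e2) * \<rho> ^ n * v j"
proof (induction n arbitrary: x1 x2 j)
  case 0
  let ?E = "exp (real_of_int x1 * e1 + real_of_int x2 * e2)"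
  have "(\<Sum>p\<in>F. exp (real (fst p) * e1 + real (snd p) * e2) * Qn A 0 (x1, x2, j) (int (fst p), int (snd p), j'))
     \<le> (\<Sum>p\<in>F. if (nat x1, nat x2) = p then ?E else 0)"
    by (intro sum_mono) auto
  also have "\<dots> \<le> ?E" using \<open>finite F\<close> by (simp add: sum.delta)
  also have "\<dots> \<le> ?E * \<rho> ^ 0 * v j" using v_ge_1[of j] by simp
  finally show ?case .
next
  case (Suc n)
  let ?E = "\<lambda>p. exp (real (fst p) * e1 + real (snd p) * e2)"
  have v_nonneg: "0 \<le> v i" for i using v_ge_1[of i] by simp
  show ?case
  proof (cases "(x1, x2, j) \<in> Splus")
    case False
    then show ?thesis using v_nonneg[of j] \<open>0 \<le> \<rho>\<close> by simp
  next
    case True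
    have "(\<Sum>p\<in>F. ?E p * Qn A (Suc n) (x1, x2, j) (int (fst p), int (snd p), j'))
      = (\<Sum>k\<in>steps. \<Sum>l\<in>steps. \<Sum>i\<in>UNIV. A k l j i *
           (\<Sum>p\<in>F. ?E p * Qn A n (x1 + k, x2 + l, i) (int (fst p), int (snd p), j')))"
      using True by (simp add: sum_distrib_left sum.swap[of _ F] mult_ac)
    also have "\<dots> \<le> (\<Sum>k\<in>steps. \<Sum>l\<in>steps. \<Sum>i\<in>UNIV. A k l j i *
      (exp (real_of_int (x1 + k) * e1 + real_of_int (x2 + l) * e2) * \<rho> ^ n * v i))"
      by (intro sum_mono mult_left_mono Suc.IH nonneg)
    also have "\<dots> = exp (real_of_int x1 * e1 + real_of_int x2 * e2) * \<rho> ^ n *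
        (\<Sum>i\<in>UNIV. Astar A (e1, e2) j i * v i)"
      by (rule sum_steps_exp_eq_Astar)
    also have "\<dots> \<le> exp (real_of_int x1 * e1 + real_of_int x2 * e2) * \<rho> ^ n * (\<rho> * v j)"
      using \<open>0 \<le> \<rho>\<close> by (intro mult_left_mono Lyap) auto
    finally show ?thesis by (simp add: mult_ac)
  qed
qed

lemma Phi_le_Lyapunov_vector:
  fixes A :: "int \<Rightarrow> int \<Rightarrow> 'j::finite \<Rightarrow> 'j \<Rightarrow> real"
  assumes nonneg: "\<And>k l j j'. A k l j j' \<ge> 0" and v_ge_1: "\<And>i. v i \<ge> 1"
    and \<rho>: "0 \<le> \<rho>" "\<rho> < 1"
    and Lyap: "\<And>i. (\<Sum>j\<in>UNIV. Astar A (e1, e2) i j * v j) \<le> \<rho> * v i"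
  shows "Phi A (x1, x2) (e1, e2) j j'
    \<le> ennreal (exp (real_of_int x1 * e1 + real_of_int x2 * e2) * v j / (1 - \<rho>))"
proof -
  let ?E = "\<lambda>p. exp (real (fst p) * e1 + real (snd p) * e2)"
  let ?Q = "\<lambda>n p. Qn A n (x1, x2, j) (int (fst p), int (snd p), j')"
  let ?X = "exp (real_of_int x1 * e1 + real_of_int x2 * e2)"
  define f where "f = (\<lambda>p. \<Sum>n. ennreal (?E p * ?Q n p))"
  have "Phi A (x1, x2) (e1, e2) j j' = infsum f UNIV"
    unfolding Phi_def qtilde_def f_def by (intro infsum_cong) (simp add: case_prod_beta ennreal_mult')
  also have "\<dots> = (SUP F\<in>{F. finite F \<and> F \<subseteq> UNIV}. sum f F)"
    by (rule nonneg_infsum_complete) simp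
  also have "\<dots> \<le> ennreal (?X * v j / (1 - \<rho>))"
  proof (rule SUP_least)
    fix F assume "F \<in> {F. finite F \<and> F \<subseteq> (UNIV :: (nat \<times> nat) set)}"
    hence "finite F" by simp
    have "sum f F = (\<Sum>n. \<Sum>p\<in>F. ennreal (?E p * ?Q n p))"
      unfolding f_def by (rule suminf_sum[symmetric]) simp
    also have "\<dots> = (\<Sum>n. ennreal (\<Sum>p\<in>F. ?E p * ?Q n p))"
      by (intro suminf_cong sum_ennreal) (simp add: Qn_nonneg nonneg)
    also have "\<dots> \<le> (\<Sum>n. ennreal (?X * v j * \<rho> ^ n))"
      using Qn_exp_moment_le[OF nonneg v_ge_1 \<rho>(1) Lyap \<open>finite F\<close>]
      by (intro suminf_le ennreal_leI) (simp_all add: mult_ac)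
    also have "\<dots> = ennreal (\<Sum>n. ?X * v j * \<rho> ^ n)"
      using \<rho> v_ge_1[of j]
      by (intro suminf_ennreal2 mult_nonneg_nonneg summable_mult summable_geometric) auto
    also have "(\<Sum>n. ?X * v j * \<rho> ^ n) = ?X * v j / (1 - \<rho>)"
      using \<rho> by (simp add: suminf_mult summable_geometric suminf_geometric)
    finally show "sum f F \<le> ennreal (?X * v j / (1 - \<rho>))" .
  qed
  finally show ?thesis .
qed

lemma Phi_mono:
  assumes "fst \<eta> \<le> fst \<theta>" "snd \<eta> \<le> snd \<theta>"
  shows "Phi A x \<eta> j j' \<le> Phi A x \<theta> j j'"
  unfolding Phi_def
proof (rule infsum_mono_neutral)
  fix p :: "nat \<times> nat"
  have "real (fst p) * fst \<eta> + real (snd p) * snd \<eta> \<le> real (fst p) * fst \<theta> + real (snd p) * snd \<theta>"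
    using assms by (intro add_mono mult_left_mono) auto
  thus "(case p of (k1, k2) \<Rightarrow> ennreal (exp (real k1 * fst \<eta> + real k2 * snd \<eta>)) *
          qtilde A (fst x, snd x, j) (int k1, int k2, j'))
     \<le> (case p of (k1, k2) \<Rightarrow> ennreal (exp (real k1 * fst \<theta> + real k2 * snd \<theta>)) *
          qtilde A (fst x, snd x, j) (int k1, int k2, j'))"
    by (auto simp: case_prod_beta intro!: mult_right_mono ennreal_leI)
qed (auto intro: nonneg_summable_on_complete)

lemma Gamma_subset_Dx:
  fixes A :: "int \<Rightarrow> int \<Rightarrow> 'j::finite \<Rightarrow> 'j \<Rightarrow> real"
  assumes nonneg: "\<And>k l j j'. A k l j j' \<ge> 0"
  shows "Gamma A \<subseteq> Dx A x"
proof
  fix \<theta> assume "\<theta> \<in> Gamma A"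
  then obtain v \<rho> d where v_ge_1: "\<And>i. v i \<ge> 1" and \<rho>: "0 \<le> \<rho>" "\<rho> < 1" and "d > 0"
    and Lyap: "\<And>\<eta> i. \<eta> \<in> ball \<theta> d \<Longrightarrow> (\<Sum>j\<in>UNIV. Astar A \<eta> i j * v j) \<le> \<rho> * v i"
    by (rule Gamma_Lyapunov_vector_near[of A, OF nonneg]) blast
  obtain x1 x2 where x: "x = (x1, x2)" by force
  have "Phi A x (e1, e2) j j' < Orderings.top" if "(e1, e2) \<in> ball \<theta> d" for e1 e2 j j'
    using le_less_trans[OF Phi_le_Lyapunov_vector[OF nonneg v_ge_1 \<rho> Lyap[OF that]]]
    unfolding x by (simp add: ennreal_less_top)
  hence "ball \<theta> d \<subseteq> {\<eta>. \<forall>j j'. Phi A x \<eta> j j' < Orderings.top}" by auto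
  with \<open>d > 0\<close> show "\<theta> \<in> Dx A x" unfolding Dx_def mem_interior by blast
qed

lemma strictly_below_in_interior:
  fixes S :: "(real \<times> real) set"
  assumes down: "\<And>\<eta> \<theta>. \<theta> \<in> S \<Longrightarrow> fst \<eta> \<le> fst \<theta> \<Longrightarrow> snd \<eta> \<le> snd \<theta> \<Longrightarrow> \<eta> \<in> S"
    and "\<theta>' \<in> S" "fst \<theta> < fst \<theta>'" "snd \<theta> < snd \<theta>'"
  shows "\<theta> \<in> interior S"
proof -
  define e where "e = min (fst \<theta>' - fst \<theta>) (snd \<theta>' - snd \<theta>)"
  have "ball \<theta> e \<subseteq> S"
  proof
    fix \<eta> assume "\<eta> \<in> ball \<theta> e"
    hence "fst \<eta> \<le> fst \<theta>'" "snd \<eta> \<le> snd \<theta>'"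
      using dist_fst_le[of \<theta> \<eta>] dist_snd_le[of \<theta> \<eta>] unfolding e_def
      by (simp_all add: dist_real_def abs_le_iff)
    with down \<open>\<theta>' \<in> S\<close> show "\<eta> \<in> S" by blast
  qed
  moreover have "e > 0" using assms(3,4) unfolding e_def by simp
  ultimately show ?thesis unfolding mem_interior by blast
qed

lemma Dset_subset_Dx:
  assumes "Gamma A \<subseteq> Dx A x"
  shows "Dset A \<subseteq> Dx A x"
proof
  define S where "S = {\<theta>. \<forall>j j'. Phi A x \<theta> j j' < Orderings.top}"
  have down: "\<eta> \<in> S" if "\<theta> \<in> S" "fst \<eta> \<le> fst \<theta>" "snd \<eta> \<le> snd \<theta>" for \<eta> \<theta>
    using that(1) le_less_trans[OF Phi_mono[OF that(2,3)]] unfolding S_def by blast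
  fix \<theta> assume "\<theta> \<in> Dset A"
  then obtain \<theta>' where "\<theta>' \<in> Dx A x" "fst \<theta> < fst \<theta>'" "snd \<theta> < snd \<theta>'"
    using assms unfolding Dset_def by blast
  moreover have "\<theta>' \<in> S" using \<open>\<theta>' \<in> Dx A x\<close> interior_subset unfolding Dx_def S_def by blast
  ultimately have "\<theta> \<in> interior S" by (intro strictly_below_in_interior[OF down])
  then show "\<theta> \<in> Dx A x" unfolding Dx_def S_def .
qed

theorem lemma4p3:
  fixes A :: "int \<Rightarrow> int \<Rightarrow> 'j::finite \<Rightarrow> 'j \<Rightarrow> real"
    and \<pi> :: "'j \<Rightarrow> real"
  assumes nonneg: "\<And>k l j j'. A k l j j' \<ge> 0"
    and stoch: "\<And>j. (\<Sum>k\<in>steps. \<Sum>l\<in>steps. \<Sum>j'\<in>UNIV. A k l j j') = 1"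
    and irred: "\<And>y y'. \<exists>n. Pn A n y y' > 0"
    and aper: "\<And>y. Gcd {n. n > 0 \<and> Pn A n y y > 0} = 1"
    and pi_nonneg: "\<And>j. \<pi> j \<ge> 0"
    and pi_sum: "(\<Sum>j\<in>UNIV. \<pi> j) = 1"
    and pi_stat: "\<And>j'. (\<Sum>j\<in>UNIV. \<pi> j * (\<Sum>k\<in>steps. \<Sum>l\<in>steps. A k l j j')) = \<pi> j'"
    and drift: "(\<Sum>j\<in>UNIV. \<pi> j * (\<Sum>l\<in>steps. \<Sum>j'\<in>UNIV. A 1 l j j' - A (-1) l j j')) < 0
              \<or> (\<Sum>j\<in>UNIV. \<pi> j * (\<Sum>k\<in>steps. \<Sum>j'\<in>UNIV. A k 1 j j' - A k (-1) j j')) < 0"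
    and Pplus_irred: "\<And>y y'. y \<in> Splus \<Longrightarrow> y' \<in> Splus \<Longrightarrow> \<exists>n. Qn A n y y' > 0"
  shows "\<forall>x1 x2 :: int. x1 \<ge> 0 \<longrightarrow> x2 \<ge> 0 \<longrightarrow>
           Gamma A \<subseteq> Dx A (x1, x2) \<and> Dset A \<subseteq> Dx A (x1, x2)"
proof (intro allI impI conjI)
  fix x1 x2 :: int
  show "Gamma A \<subseteq> Dx A (x1, x2)" by (rule Gamma_subset_Dx[OF nonneg])
  then show "Dset A \<subseteq> Dx A (x1, x2)" by (rule Dset_subset_Dx)
qed

end
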